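(* Assume (A) and (N) hold and $\omega_A<0$. For $t\ge0$, $\omega\in\Omega$ and $\xi\in H_0$ define $$\phi^t_\omega(\xi):=T_0(t)\xi-S_A'(t)Y_\omega(0)+Y_{\theta_t\omega}(0).$$ Then $\phi:\mathbb{R}^+\times\Omega\times H_0\to H_0$ is a random dynamical system over $(\Omega,\mathcal{F},\mathbb{P},(\theta_t))$; in particular $\phi^{t+s}_\omega(\xi)=\phi^s_{\theta_t\omega}\circ\phi^t_\omega(\xi)$ for all $\xi\in H_0$, $t,s\ge0$ and $\omega$.
   Context: Let $H$ be a separable Hilbert space and $A:D(A)\subset H\to H$ a linear operator with $H_0:=\overline{D(A)}\neq H$. The part of $A$ in $H_0$ is $A_0y:=Ay$ on $D(A_0):=\{y\in D(A):Ay\in H_0\}$. Assumption (A): (a) $A_0$ is sectorial on $H_0$, i.e. there are $\bar\omega\in\mathbb{R}$, $\vartheta\in(\pi/2,\pi)$, $\bar M>0$ with $\rho(A_0)\supset S_\vartheta:=\{z\in\mathbb{C}\setminus\{\bar\omega\}:|\arg(z-\bar\omega)|\le\vartheta\}$ and $\|(\lambda-A_0)^{-1}\|\le\bar M/|\lambda-\bar\omega|$ for $\lambda\in S_\vartheta$; (b) there exist $\omega_A\in\mathbb{R}$ and $p^*\in[1,\infty)$ with $(\omega_A,\infty)\subset\rho(A)$ and $\limsup_{\lambda\to+\infty}\lambda^{1/p^*}\|(\lambda I-A)^{-1}\|_{\mathcal{L}(H)}<\infty$. Under (A), $A_0$ generates an analytic $C_0$-semigroup $(T_0(t))_{t\ge0}$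 on $H_0$ and $A$ generates the integrated semigroup $S_A(t)=(\nu I-A_0)\int_0^tT_0(s)\,\mathrm{d}s\,(\nu I-A)^{-1}$ ($\nu>\omega_A$), differentiable in $t>0$, with $S_A'(t)x=T_0(t)x$ for $x\in H_0$. Assumption (N): $(\Omega,\mathcal{F},\mathbb{P},(\theta_t)_{t\in\mathbb{R}})$ is an ergodic metric dynamical system (each $\theta_t$ measurable and $\mathbb{P}$-preserving, $(t,\omega)\mapsto\theta_t\omega$ jointly measurable, $\theta_0=\mathrm{id}$, $\theta_{t+s}=\theta_t\circ\theta_s$, invariant sets have probability $0$ or $1$), and $W$ is a two-sided $Q$-Wiener process on $H$ ($Q$ trace class) with $W_t(\theta_s\omega)=W_{t+s}(\omega)-W_s(\omega)$. For $\omega_A<0$, $Y_\omega(t):=\int_{-\infty}^tS_A'(t-\tau)\,\mathrm{d}W(\tau)$ is an $H_0$-valued stationary process: $Y_{\theta_t\omega}(s)=Y_\omega(t+s)$ on a set of full measure. A random dynamical system (cocycle) on $H_0$ is a $(\mathcal{B}(\mathbb{R}^+)\otimes\mathcal{F}\otimes\mathcal{B}(H_0),\mathcal{B}(H_0))$-measurable map $\phi$ such that on a measurable set of full measure $\phi^0_\omega=\mathrm{id}$ and $\phi^{t+s}_\omega=\phi^s_{\theta_t\omega}\circ\phi^t_\omega$ for all $t,s\ge0$. *)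

theory Defs
  imports "HOL-Analysis.Analysis" "HOL-Probability.Probability"
begin

text \<open>Linear operator A with domain DA on a (real, separable) Hilbert space.
  H0 = closure DA; the part A0 of A in H0 has domain part_dom.\<close>

definition lin_op :: "'h::real_vector set \<Rightarrow> ('h \<Rightarrow> 'h) \<Rightarrow> bool" where
  "lin_op D A \<longleftrightarrow> subspace D \<and>
     (\<forall>x\<in>D. \<forall>y\<in>D. A (x + y) = A x + A y) \<and> (\<forall>c. \<forall>x\<in>D. A (c *\<^sub>R x) = c *\<^sub>R A x)"

definition part_dom :: "'h::real_normed_vector set \<Rightarrow> ('h \<Rightarrow> 'h) \<Rightarrow> 'h set" where
  "part_dom D A = {y \<in> D. A y \<in> closure D}"

definition in_real_resolvent :: "'h::real_normed_vector set \<Rightarrow> 'h set \<Rightarrow> ('h \<Rightarrow> 'h) \<Rightarrow> real \<Rightarrow> bool" where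
  "in_real_resolvent X D A lam \<longleftrightarrow>
     (\<forall>x\<in>X. \<exists>!y. y \<in> D \<and> lam *\<^sub>R y - A y = x) \<and>
     (\<exists>C. \<forall>y\<in>D. norm y \<le> C * norm (lam *\<^sub>R y - A y))"

definition resolv :: "'h::real_vector set \<Rightarrow> ('h \<Rightarrow> 'h) \<Rightarrow> real \<Rightarrow> 'h \<Rightarrow> 'h" where
  "resolv D A lam x = (THE y. y \<in> D \<and> lam *\<^sub>R y - A y = x)"

text \<open>Complex resolvent on the complexification X + iX of a real space:
  for lam = a + ib, (lam - A)(x + iy) = (a x - b y - A x) + i (b x + a y - A y).
  lam in resolvent set with resolvent norm bound K.\<close>
definition cplx_res_op :: "('h::real_vector \<Rightarrow> 'h) \<Rightarrow> complex \<Rightarrow> 'h \<times> 'h \<Rightarrow> 'h \<times> 'h" where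
  "cplx_res_op A lam p = (Re lam *\<^sub>R fst p - Im lam *\<^sub>R snd p - A (fst p),
                          Im lam *\<^sub>R fst p + Re lam *\<^sub>R snd p - A (snd p))"

definition cplx_norm :: "'h::real_normed_vector \<times> 'h \<Rightarrow> real" where
  "cplx_norm p = sqrt ((norm (fst p))\<^sup>2 + (norm (snd p))\<^sup>2)"

definition cplx_resolvent_bound ::
  "'h::real_normed_vector set \<Rightarrow> 'h set \<Rightarrow> ('h \<Rightarrow> 'h) \<Rightarrow> complex \<Rightarrow> real \<Rightarrow> bool" where
  "cplx_resolvent_bound X D A lam K \<longleftrightarrow>
     (\<forall>q\<in>X \<times> X. \<exists>!p. p \<in> D \<times> D \<and> cplx_res_op A lam p = q) \<and>
     (\<forall>p\<in>D \<times> D. cplx_norm p \<le> K * cplx_norm (cplx_res_op A lam p))"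

definition sector :: "real \<Rightarrow> real \<Rightarrow> complex set" where
  "sector w th = {z. z \<noteq> complex_of_real w \<and> \<bar>Arg (z - complex_of_real w)\<bar> \<le> th}"

definition sectorial :: "'h::real_normed_vector set \<Rightarrow> 'h set \<Rightarrow> ('h \<Rightarrow> 'h) \<Rightarrow> bool" where
  "sectorial X D A \<longleftrightarrow> (\<exists>w th M. pi/2 < th \<and> th < pi \<and> M > 0 \<and>
      (\<forall>lam\<in>sector w th. cplx_resolvent_bound X D A lam (M / cmod (lam - complex_of_real w))))"

definition assumption_A :: "'h::real_normed_vector set \<Rightarrow> ('h \<Rightarrow> 'h) \<Rightarrow> real \<Rightarrow> bool" where
  "assumption_A D A omegaA \<longleftrightarrow>
     sectorial (closure D) (part_dom D A) A \<and>
     (\<forall>lam>omegaA. in_real_resolvent UNIV D A lam) \<and>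
     (\<exists>p\<ge>1. \<exists>C lam0. \<forall>lam\<ge>lam0. \<forall>x.
         lam powr (1 / p) * norm (resolv D A lam x) \<le> C * norm x)"

definition C0_semigroup_generated ::
  "'h::real_normed_vector set \<Rightarrow> 'h set \<Rightarrow> ('h \<Rightarrow> 'h) \<Rightarrow> (real \<Rightarrow> 'h \<Rightarrow> 'h) \<Rightarrow> bool" where
  "C0_semigroup_generated X D0 A0 T \<longleftrightarrow>
     (\<forall>t\<ge>0. T t ` X \<subseteq> X \<and>
        (\<forall>x\<in>X. \<forall>y\<in>X. T t (x + y) = T t x + T t y) \<and>
        (\<forall>c. \<forall>x\<in>X. T t (c *\<^sub>R x) = c *\<^sub>R T t x) \<and>
        (\<exists>C. \<forall>x\<in>X. norm (T t x) \<le> C * norm x)) \<and>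
     (\<forall>x\<in>X. T 0 x = x) \<and>
     (\<forall>t\<ge>0. \<forall>s\<ge>0. \<forall>x\<in>X. T (t + s) x = T t (T s x)) \<and>
     (\<forall>x\<in>X. continuous_on {0..} (\<lambda>t. T t x)) \<and>
     (\<forall>x. x \<in> D0 \<longleftrightarrow> x \<in> X \<and> (\<exists>l. ((\<lambda>h. (1 / h) *\<^sub>R (T h x - x)) \<longlongrightarrow> l) (at_right 0))) \<and>
     (\<forall>x\<in>D0. ((\<lambda>h. (1 / h) *\<^sub>R (T h x - x)) \<longlongrightarrow> A0 x) (at_right 0))"

definition integrated_sg ::
  "'h::real_normed_vector set \<Rightarrow> ('h \<Rightarrow> 'h) \<Rightarrow> (real \<Rightarrow> 'h \<Rightarrow> 'h) \<Rightarrow> real \<Rightarrow> real \<Rightarrow> 'h \<Rightarrow> 'h" where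
  "integrated_sg D A T nu t x =
     (let z = integral {0..t} (\<lambda>s. T s (resolv D A nu x)) in nu *\<^sub>R z - A z)"

definition integrated_sg_deriv ::
  "'h::real_normed_vector set \<Rightarrow> ('h \<Rightarrow> 'h) \<Rightarrow> (real \<Rightarrow> 'h \<Rightarrow> 'h) \<Rightarrow> real \<Rightarrow> real \<Rightarrow> 'h \<Rightarrow> 'h" where
  "integrated_sg_deriv D A T nu t x =
     vector_derivative (\<lambda>\<tau>. integrated_sg D A T nu \<tau> x) (at t within {0..})"

definition ergodic_mds :: "'w measure \<Rightarrow> (real \<Rightarrow> 'w \<Rightarrow> 'w) \<Rightarrow> bool" where
  "ergodic_mds M \<theta> \<longleftrightarrow> prob_space M \<and>
     (\<forall>t. \<theta> t \<in> M \<rightarrow>\<^sub>M M \<and> distr M M (\<theta> t) = M) \<and>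
     (\<lambda>(t, w). \<theta> t w) \<in> borel \<Otimes>\<^sub>M M \<rightarrow>\<^sub>M M \<and>
     (\<forall>w\<in>space M. \<theta> 0 w = w) \<and>
     (\<forall>t s. \<forall>w\<in>space M. \<theta> (t + s) w = \<theta> t (\<theta> s w)) \<and>
     (\<forall>B\<in>sets M. (\<forall>t. \<theta> t -` B \<inter> space M = B) \<longrightarrow>
         measure M B = 0 \<or> measure M B = 1)"

definition rds :: "'w measure \<Rightarrow> (real \<Rightarrow> 'w \<Rightarrow> 'w) \<Rightarrow> 'h::topological_space set
                    \<Rightarrow> (real \<Rightarrow> 'w \<Rightarrow> 'h \<Rightarrow> 'h) \<Rightarrow> bool" where
  "rds M \<theta> X \<phi> \<longleftrightarrow>
     (\<lambda>(t, w, x). \<phi> t w x) \<in> restrict_space borel {0..} \<Otimes>\<^sub>M (M \<Otimes>\<^sub>M restrict_space borel X)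
        \<rightarrow>\<^sub>M restrict_space borel X \<and>
     (\<exists>\<Omega>'\<in>sets M. emeasure M \<Omega>' = emeasure M (space M) \<and>
        (\<forall>w\<in>\<Omega>'. (\<forall>x\<in>X. \<phi> 0 w x = x) \<and>
           (\<forall>t\<ge>0. \<forall>s\<ge>0. \<forall>x\<in>X. \<phi> (t + s) w x = \<phi> s (\<theta> t w) (\<phi> t w x))))"

end

theory Submission
  imports Defs
begin

text \<open>Let \<open>P u \<tau>\<close> be the orbit integral of \<open>T0(r) u\<close> over \<open>[0, \<tau>]\<close>. For \<open>u \<in> H0\<close> it lies
  in the domain of the part \<open>A0\<close> of \<open>A\<close> with \<open>A (P u \<tau>) = T0(\<tau>) u - u\<close>, and for \<open>y\<close> in that
  domain \<open>T0(\<tau>) y - y = P (A y) \<tau>\<close>. Writing \<open>x \<in> H0\<close> as \<open>\<nu> y - A y\<close> with \<open>y \<in> D\<close>, these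
  turn \<open>S(\<tau>) x = \<nu> P y \<tau> - A (P y \<tau>)\<close> into \<open>P x \<tau>\<close>, so \<open>S'(t) x = T0(t) x\<close>. Hence
  \<open>\<phi> t \<omega> \<xi> = T0(t) \<xi> - T0(t) (Y \<omega> 0) + Y (\<theta> t \<omega>) 0\<close>, and the cocycle identity is the
  semigroup law combined with \<open>\<theta> (t + s) = \<theta> s \<circ> \<theta> t\<close>. It holds for every \<open>\<omega>\<close>. Joint measurability
  follows from the separate continuity of \<open>(t, \<xi>) \<mapsto> T0(t) \<xi>\<close>.

  Each \<open>T0(t)\<close> is only known to be bounded individually, with no bound uniform on compact
  time intervals, so orbits \<open>t \<mapsto> T0(t) y\<close> are differentiated from the right only, and
  identities between them come from a Dini-derivative monotonicity argument instead of
  the mean value theorem.\<close>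

section \<open>Right derivatives\<close>

lemma has_vector_derivative_at_right_iff:
  fixes g :: "real \<Rightarrow> 'a::real_normed_vector"
  shows "(g has_vector_derivative g') (at_right \<tau>) \<longleftrightarrow>
    ((\<lambda>h. (1 / h) *\<^sub>R (g (\<tau> + h) - g \<tau>)) \<longlongrightarrow> g') (at_right 0)"
proof -
  have "eventually (\<lambda>y. (1 / norm (y - \<tau>)) *\<^sub>R (g y - (g \<tau> + (y - \<tau>) *\<^sub>R g')) =
      (1 / (y - \<tau>)) *\<^sub>R (g y - g \<tau>) - g') (at_right \<tau>)"
    by (rule eventually_at_rightI[of \<tau> "\<tau> + 1"]) (auto simp: scaleR_diff_right scaleR_add_right)
  then have "(g has_vector_derivative g') (at_right \<tau>) \<longleftrightarrow>
      ((\<lambda>y. (1 / (y - \<tau>)) *\<^sub>R (g y - g \<tau>)) \<longlongrightarrow> g') (at_right \<tau>)"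
    unfolding has_vector_derivative_def has_derivative_within
    by (simp add: bounded_linear_scaleR_left tendsto_cong Lim_null[symmetric])
  also have "\<dots> \<longleftrightarrow> ((\<lambda>h. (1 / h) *\<^sub>R (g (\<tau> + h) - g \<tau>)) \<longlongrightarrow> g') (at_right 0)"
    by (simp add: at_right_to_0[of \<tau>] filterlim_filtermap add.commute)
  finally show ?thesis .
qed

lemma has_vector_derivative_at_right_estimate:
  fixes g :: "real \<Rightarrow> 'a::real_normed_vector"
  assumes "(g has_vector_derivative g') (at_right \<tau>)" and "e > 0"
  shows "eventually (\<lambda>x. norm (g x - g \<tau> - (x - \<tau>) *\<^sub>R g') \<le> e * (x - \<tau>)) (at_right \<tau>)"
proof -
  obtain d where "d > 0" and d: "\<And>y. y > \<tau> \<Longrightarrow> norm (y - \<tau>) < d \<Longrightarrow>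
      norm (g y - g \<tau> - (y - \<tau>) *\<^sub>R g') \<le> e * norm (y - \<tau>)"
    using assms unfolding has_vector_derivative_def has_derivative_within_alt by force
  then show ?thesis
    by (intro eventually_at_rightI[of \<tau> "\<tau> + d"]) (auto dest: d)
qed

lemma has_vector_derivative_at_right_if_within:
  assumes "(g has_vector_derivative g') (at \<tau> within {a..b})" and "a \<le> \<tau>" "\<tau> < b"
  shows "(g has_vector_derivative g') (at_right \<tau>)"
  using has_vector_derivative_within_subset[OF assms(1), of "{\<tau>..b}"] assms(2,3)
  by (simp add: at_within_Icc_at_right)

lemma le_if_right_Dini_nonpos:
  fixes \<phi> :: "real \<Rightarrow> real"
  assumes "a \<le> b" and cont: "continuous_on {a..b} \<phi>"
    and Dini: "\<And>\<tau> e. \<tau> \<in> {a..<b} \<Longrightarrow> e > 0 \<Longrightarrow>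
      eventually (\<lambda>x. \<phi> x - \<phi> \<tau> \<le> e * (x - \<tau>)) (at_right \<tau>)"
  shows "\<phi> b \<le> \<phi> a"
proof -
  have key: "\<phi> b - \<phi> a \<le> e * (b - a)" if "e > 0" for e
  proof -
    define S where "S = {x \<in> {a..b}. \<phi> x \<le> \<phi> a + e * (x - a)}"
    have "closed S" unfolding S_def
      by (rule continuous_on_closed_Collect_le[OF cont]) (auto intro!: continuous_intros)
    moreover have "a \<in> S" and bdd: "bdd_above S"
      using \<open>a \<le> b\<close> by (auto simp: S_def bdd_above_def)
    ultimately have cS: "Sup S \<in> S" by (metis closed_contains_Sup empty_iff)
    have "Sup S = b"
    proof (rule ccontr)
      assume "Sup S \<noteq> b"
      with cS have c: "Sup S \<in> {a..<b}" by (auto simp: S_def)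
      obtain d where "d > Sup S" and d: "\<And>x. Sup S < x \<Longrightarrow> x < d \<Longrightarrow>
          \<phi> x - \<phi> (Sup S) \<le> e * (x - Sup S)"
        using Dini[OF c \<open>e > 0\<close>] unfolding eventually_at_right_field by blast
      define x where "x = min ((Sup S + d) / 2) b"
      have "Sup S < x" "x < d" "x \<le> b"
        using c \<open>d > Sup S\<close> by (auto simp: x_def min_less_iff_disj)
      with d have x: "Sup S < x" "x \<le> b" "\<phi> x - \<phi> (Sup S) \<le> e * (x - Sup S)"
        by auto
      have "\<phi> (Sup S) \<le> \<phi> a + e * (Sup S - a)" using cS by (simp add: S_def)
      with x have "x \<in> S" using c by (simp add: S_def right_diff_distrib)
      then show False using cSup_upper[OF _ bdd] x(1) by fastforce
    qed
    then show ?thesis using cS by (simp add: S_def)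
  qed
  have "\<phi> b \<le> \<phi> a + e" if "e > 0" for e
  proof -
    have "\<phi> b - \<phi> a \<le> e / (b - a + 1) * (b - a)"
      using key[of "e / (b - a + 1)"] \<open>e > 0\<close> \<open>a \<le> b\<close> by simp
    also have "\<dots> \<le> e"
      using \<open>e > 0\<close> \<open>a \<le> b\<close> by (simp add: field_simps)
    finally show ?thesis by simp
  qed
  then show ?thesis by (rule field_le_epsilon)
qed

lemma eq_if_right_derivative_zero:
  fixes g :: "real \<Rightarrow> 'a::real_normed_vector"
  assumes "a \<le> b" and "continuous_on {a..b} g"
    and "\<And>\<tau>. \<tau> \<in> {a..<b} \<Longrightarrow> (g has_vector_derivative 0) (at_right \<tau>)"
  shows "g b = g a"
proof -
  have "norm (g b - g a) \<le> norm (g a - g a)"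
  proof (rule le_if_right_Dini_nonpos[OF \<open>a \<le> b\<close>])
    show "continuous_on {a..b} (\<lambda>x. norm (g x - g a))"
      by (intro continuous_intros assms(2))
    fix \<tau> e :: real assume "\<tau> \<in> {a..<b}" and "e > 0"
    with assms(3) have "eventually (\<lambda>x. norm (g x - g \<tau>) \<le> e * (x - \<tau>)) (at_right \<tau>)"
      using has_vector_derivative_at_right_estimate by fastforce
    then show "eventually (\<lambda>x. norm (g x - g a) - norm (g \<tau> - g a) \<le> e * (x - \<tau>)) (at_right \<tau>)"
    proof eventually_elim
      case (elim x)
      then show ?case using norm_triangle_ineq[of "g x - g \<tau>" "g \<tau> - g a"] by simp
    qed
  qed
  then show ?thesis by simp
qed

section \<open>Integrals in complete normed spaces\<close>

text \<open>The sort \<open>{real_normed_vector, complete_space}\<close> does not entail the class \<open>banach\<close>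
  required by the integration library, so integrals of functions into such a type are
  computed in an isomorphic copy that is declared an instance of \<open>banach\<close>.\<close>

typedef 'a banach_copy = "UNIV :: 'a set" ..

lemmas banach_copy_simps = Abs_banach_copy_inverse[OF UNIV_I] Rep_banach_copy_inverse
  Rep_banach_copy_inject[symmetric]

instantiation banach_copy :: (real_normed_vector) real_normed_vector
begin
definition "0 = Abs_banach_copy 0"
definition "x + y = Abs_banach_copy (Rep_banach_copy x + Rep_banach_copy y)"
definition "x - y = Abs_banach_copy (Rep_banach_copy x - Rep_banach_copy y)"
definition "- x = Abs_banach_copy (- Rep_banach_copy x)"
definition "c *\<^sub>R x = Abs_banach_copy (c *\<^sub>R Rep_banach_copy x)"
definition "norm x = norm (Rep_banach_copy x)"
definition "sgn x = Abs_banach_copy (sgn (Rep_banach_copy x))"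
definition "dist x y = dist (Rep_banach_copy x) (Rep_banach_copy y)"
definition "(uniformity :: ('a banach_copy \<times> 'a banach_copy) filter) =
  (INF e\<in>{0<..}. principal {(x, y). dist x y < e})"
definition "open (U :: 'a banach_copy set) =
  (\<forall>x\<in>U. eventually (\<lambda>(x', y). x' = x \<longrightarrow> y \<in> U) uniformity)"
instance
proof
  fix x y z :: "'a banach_copy" and a b :: real
  show "dist x y = norm (x - y)"
    by (simp add: dist_banach_copy_def norm_banach_copy_def minus_banach_copy_def
        banach_copy_simps dist_norm)
  show "x + y + z = x + (y + z)" "x + y = y + x" "0 + x = x" "- x + x = 0" "x - y = x + - y"
    by (simp_all add: plus_banach_copy_def zero_banach_copy_def uminus_banach_copy_def
        minus_banach_copy_def banach_copy_simps algebra_simps)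
  show "a *\<^sub>R (x + y) = a *\<^sub>R x + a *\<^sub>R y" "(a + b) *\<^sub>R x = a *\<^sub>R x + b *\<^sub>R x"
    "a *\<^sub>R b *\<^sub>R x = (a * b) *\<^sub>R x" "1 *\<^sub>R x = x"
    by (simp_all add: plus_banach_copy_def scaleR_banach_copy_def banach_copy_simps
        scaleR_add_right scaleR_add_left)
  show "sgn x = inverse (norm x) *\<^sub>R x"
    by (simp add: sgn_banach_copy_def scaleR_banach_copy_def norm_banach_copy_def sgn_div_norm)
  show "(uniformity :: ('a banach_copy \<times> 'a banach_copy) filter) =
      (INF e\<in>{0<..}. principal {(x, y). dist x y < e})"
    by (rule uniformity_banach_copy_def)
  show "open U \<longleftrightarrow> (\<forall>x\<in>U. \<forall>\<^sub>F (x', y) in uniformity. x' = x \<longrightarrow> y \<in> U)"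
    for U :: "'a banach_copy set"
    by (rule open_banach_copy_def)
  show "norm x = 0 \<longleftrightarrow> x = 0" "norm (x + y) \<le> norm x + norm y"
    "norm (a *\<^sub>R x) = \<bar>a\<bar> * norm x"
    by (simp_all add: norm_banach_copy_def zero_banach_copy_def plus_banach_copy_def
        scaleR_banach_copy_def banach_copy_simps norm_triangle_ineq)
qed
end

lemma bounded_linear_Rep_banach_copy: "bounded_linear Rep_banach_copy"
  by (rule bounded_linear_intro[of _ 1])
    (simp_all add: plus_banach_copy_def scaleR_banach_copy_def norm_banach_copy_def
      banach_copy_simps)

lemma bounded_linear_Abs_banach_copy: "bounded_linear Abs_banach_copy"
  by (rule bounded_linear_intro[of _ 1])
    (simp_all add: plus_banach_copy_def scaleR_banach_copy_def norm_banach_copy_def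
      banach_copy_simps)

instance banach_copy :: ("{real_normed_vector, complete_space}") banach
proof
  fix X :: "nat \<Rightarrow> 'a banach_copy" assume "Cauchy X"
  then have "Cauchy (\<lambda>n. Rep_banach_copy (X n))"
    by (simp add: Cauchy_def dist_banach_copy_def)
  then obtain L where "(\<lambda>n. Rep_banach_copy (X n)) \<longlonglongrightarrow> L"
    by (auto simp: Cauchy_convergent_iff convergent_def)
  from bounded_linear.tendsto[OF bounded_linear_Abs_banach_copy this]
  show "convergent X" by (auto simp: convergent_def banach_copy_simps)
qed

lemma
  fixes f :: "real \<Rightarrow> 'a::{real_normed_vector, complete_space}"
  assumes "continuous_on {a..b} f"
  shows integrable_continuous_interval_complete: "f integrable_on {a..b}"
    and integral_has_vector_derivative_complete:
      "x \<in> {a..b} \<Longrightarrow> ((\<lambda>u. integral {a..u} f) has_vector_derivative f x) (at x within {a..b})"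
proof -
  define g where "g t = Abs_banach_copy (f t)" for t
  have "continuous_on {a..b} g"
    unfolding g_def by (rule bounded_linear.continuous_on[OF bounded_linear_Abs_banach_copy assms])
  have has_integral: "(f has_integral Rep_banach_copy (integral {a..u} g)) {a..u}"
    if "u \<in> {a..b}" for u
  proof -
    have "(g has_integral integral {a..u} g) {a..u}"
      using that continuous_on_subset[OF \<open>continuous_on {a..b} g\<close>, of "{a..u}"]
      by (intro integrable_integral integrable_continuous_interval) auto
    from has_integral_linear[OF this bounded_linear_Rep_banach_copy]
    show ?thesis by (simp add: g_def o_def Abs_banach_copy_inverse)
  qed
  show "f integrable_on {a..b}"
  proof (cases "a \<le> b")
    case True
    then show ?thesis using has_integral[of b] by auto
  qed (simp add: integrable_on_empty)
  assume x: "x \<in> {a..b}"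
  have "integral {a..u} f = Rep_banach_copy (integral {a..u} g)" if "u \<in> {a..b}" for u
    using has_integral[OF that] by (rule integral_unique)
  moreover have "((\<lambda>u. Rep_banach_copy (integral {a..u} g)) has_vector_derivative f x)
      (at x within {a..b})"
    using bounded_linear.has_vector_derivative[OF bounded_linear_Rep_banach_copy
          integral_has_vector_derivative[OF \<open>continuous_on {a..b} g\<close> x]]
    by (simp add: g_def Abs_banach_copy_inverse)
  ultimately show "((\<lambda>u. integral {a..u} f) has_vector_derivative f x) (at x within {a..b})"
    by (rule has_vector_derivative_transform[OF x])
qed

section \<open>Closed subspaces and joint measurability\<close>

lemma subspace_closure:
  fixes S :: "'a::real_normed_vector set"
  assumes "subspace S"
  shows "subspace (closure S)"
proof -
  have "x + y \<in> closure S \<and> c *\<^sub>R x \<in> closure S" if xy: "x \<in> closure S" "y \<in> closure S" for x y c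
  proof -
    obtain xs ys where xs: "\<forall>n. xs n \<in> S" "xs \<longlonglongrightarrow> x" and ys: "\<forall>n. ys n \<in> S" "ys \<longlonglongrightarrow> y"
      using xy unfolding closure_sequential by metis
    have "x + y \<in> closure S"
      unfolding closure_sequential using assms xs ys
      by (intro exI[of _ "\<lambda>n. xs n + ys n"]) (auto intro: tendsto_add subspace_add)
    moreover have "c *\<^sub>R x \<in> closure S"
      unfolding closure_sequential using assms xs
      by (intro exI[of _ "\<lambda>n. c *\<^sub>R xs n"]) (auto intro: tendsto_scaleR subspace_scale)
    ultimately show ?thesis ..
  qed
  moreover have "0 \<in> closure S"
    using assms closure_subset subspace_0 by blast
  ultimately show ?thesis by (simp add: subspace_def)
qed

lemma infdist_add_subspace_le:
  fixes x y :: "'a::real_normed_vector"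
  assumes "subspace S" and "y \<in> S"
  shows "infdist (x + y) S \<le> infdist x S"
proof -
  have "S \<noteq> {}" using assms subspace_0 by blast
  moreover have "infdist (x + y) S \<le> dist x a" if "a \<in> S" for a
  proof -
    have "infdist (x + y) S \<le> dist (x + y) (a + y)"
      using assms that by (intro infdist_le subspace_add)
    then show ?thesis by simp
  qed
  ultimately show ?thesis
    unfolding infdist_def[of x] by (auto intro: cINF_greatest)
qed

lemma ceiling_grid_tendsto:
  "(\<lambda>n. real_of_int \<lceil>real (Suc n) * t\<rceil> / real (Suc n)) \<longlonglongrightarrow> t"
proof (rule tendsto_sandwich)
  show "\<forall>\<^sub>F n in sequentially. t \<le> real_of_int \<lceil>real (Suc n) * t\<rceil> / real (Suc n)"
    by (simp add: field_simps del: of_nat_Suc)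
  have "real_of_int \<lceil>real (Suc n) * t\<rceil> / real (Suc n) \<le> t + 1 / real (Suc n)" for n
    by (simp add: field_simps del: of_nat_Suc) linarith
  then show "\<forall>\<^sub>F n in sequentially.
      real_of_int \<lceil>real (Suc n) * t\<rceil> / real (Suc n) \<le> t + 1 / real (Suc n)"
    by simp
  show "(\<lambda>n. t + 1 / real (Suc n)) \<longlonglongrightarrow> t"
    using tendsto_add[OF tendsto_const LIMSEQ_inverse_real_of_nat, of t]
    by (simp add: inverse_eq_divide)
qed simp

text \<open>Rounding \<open>\<tau>\<close> up to a grid of mesh \<open>1 / (n + 1)\<close> leaves countably many times, at each
  of which the map is measurable by continuity in space; continuity in time passes to the
  limit.\<close>

lemma borel_measurable_separately_continuous:
  fixes f :: "real \<Rightarrow> 'a::topological_space \<Rightarrow> 'b::metric_space"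
  assumes cont_time: "\<And>x. x \<in> X \<Longrightarrow> continuous_on {0..} (\<lambda>t. f t x)"
    and cont_space: "\<And>t. t \<ge> 0 \<Longrightarrow> continuous_on X (f t)"
    and \<tau>: "\<tau> \<in> borel_measurable N" "\<And>p. p \<in> space N \<Longrightarrow> \<tau> p \<ge> 0"
    and u: "u \<in> N \<rightarrow>\<^sub>M restrict_space borel X"
  shows "(\<lambda>p. f (\<tau> p) (u p)) \<in> borel_measurable N"
proof -
  define grid where "grid n i = max 0 (real_of_int i / real (Suc n))" for n :: nat and i :: int
  show ?thesis
  proof (rule borel_measurable_LIMSEQ_metric)
    fix n
    have "(\<lambda>p. f (grid n i) (u p)) \<in> borel_measurable N" for i
      using measurable_compose[OF u borel_measurable_continuous_on_restrict[OF cont_space]]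
      by (simp add: grid_def)
    moreover have "(\<lambda>p. \<lceil>real (Suc n) * \<tau> p\<rceil>) \<in> N \<rightarrow>\<^sub>M count_space UNIV"
      using \<tau>(1) by measurable
    ultimately show "(\<lambda>p. f (grid n \<lceil>real (Suc n) * \<tau> p\<rceil>) (u p)) \<in> borel_measurable N"
      by (rule measurable_compose_countable)
  next
    fix p assume p: "p \<in> space N"
    then have "u p \<in> X" using u by (auto dest: measurable_space simp: space_restrict_space)
    have "(\<lambda>n. grid n \<lceil>real (Suc n) * \<tau> p\<rceil>) \<longlonglongrightarrow> max 0 (\<tau> p)"
      unfolding grid_def by (intro tendsto_max tendsto_const ceiling_grid_tendsto)
    then have "(\<lambda>n. grid n \<lceil>real (Suc n) * \<tau> p\<rceil>) \<longlonglongrightarrow> \<tau> p"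
      using \<tau>(2)[OF p] by (simp add: max_absorb2)
    then show "(\<lambda>n. f (grid n \<lceil>real (Suc n) * \<tau> p\<rceil>) (u p)) \<longlonglongrightarrow> f (\<tau> p) (u p)"
      by (rule continuous_on_tendsto_compose[OF cont_time[OF \<open>u p \<in> X\<close>]])
        (use \<tau>(2)[OF p] in \<open>auto simp: grid_def\<close>)
  qed
qed

lemma measurable_flow_perturbation:
  fixes T :: "real \<Rightarrow> 'h::{real_normed_vector, polish_space} \<Rightarrow> 'h"
  assumes "subspace X"
    and cont_time: "\<And>x. x \<in> X \<Longrightarrow> continuous_on {0..} (\<lambda>t. T t x)"
    and cont_space: "\<And>t. t \<ge> 0 \<Longrightarrow> continuous_on X (T t)"
    and maps: "\<And>t x. t \<ge> 0 \<Longrightarrow> x \<in> X \<Longrightarrow> T t x \<in> X"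
    and \<theta>: "(\<lambda>(t, w). \<theta> t w) \<in> borel \<Otimes>\<^sub>M M \<rightarrow>\<^sub>M M"
    and y: "y \<in> M \<rightarrow>\<^sub>M restrict_space borel X"
  shows "(\<lambda>(t, w, x). T t x - T t (y w) + y (\<theta> t w))
    \<in> restrict_space borel {0..} \<Otimes>\<^sub>M (M \<Otimes>\<^sub>M restrict_space borel X) \<rightarrow>\<^sub>M restrict_space borel X"
proof -
  define N where "N = restrict_space borel {0::real..} \<Otimes>\<^sub>M (M \<Otimes>\<^sub>M restrict_space borel X)"
  have space_N: "space N = {0..} \<times> (space M \<times> X)"
    by (simp add: N_def space_pair_measure space_restrict_space)
  have time: "fst \<in> borel_measurable N"
    unfolding N_def by (intro measurable_compose[OF measurable_fst] measurable_restrict_space1) simp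
  have omega: "(\<lambda>p. fst (snd p)) \<in> N \<rightarrow>\<^sub>M M"
    unfolding N_def by measurable
  have state: "(\<lambda>p. snd (snd p)) \<in> N \<rightarrow>\<^sub>M restrict_space borel X"
    unfolding N_def by measurable
  have "(\<lambda>p. \<theta> (fst p) (fst (snd p))) \<in> N \<rightarrow>\<^sub>M M"
    using measurable_compose[OF measurable_Pair[OF time omega] \<theta>] by simp
  then have y\<theta>: "(\<lambda>p. y (\<theta> (fst p) (fst (snd p)))) \<in> N \<rightarrow>\<^sub>M restrict_space borel X"
    by (rule measurable_compose[OF _ y])
  have y_values: "y w \<in> X" if "w \<in> space M" for w
    using measurable_space[OF y that] by (simp add: space_restrict_space)
  have \<theta>_space: "\<theta> t w \<in> space M" if "w \<in> space M" for t w
    using measurable_space[OF \<theta>, of "(t, w)"] that by (simp add: space_pair_measure)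
  have T_meas: "(\<lambda>p. T (fst p) (u p)) \<in> borel_measurable N"
    if "u \<in> N \<rightarrow>\<^sub>M restrict_space borel X" for u
    using that by (intro borel_measurable_separately_continuous[OF cont_time cont_space time])
      (auto simp: space_N)
  show ?thesis
    unfolding N_def[symmetric]
  proof (rule measurable_restrict_space2)
    have "(\<lambda>p. T (fst p) (snd (snd p)) - T (fst p) (y (fst (snd p))) + y (\<theta> (fst p) (fst (snd p))))
        \<in> borel_measurable N"
      by (intro borel_measurable_add borel_measurable_diff T_meas state
          measurable_compose[OF omega y] measurable_compose[OF y\<theta> measurable_restrict_space1]) simp
    then show "(\<lambda>(t, w, x). T t x - T t (y w) + y (\<theta> t w)) \<in> borel_measurable N"
      by (simp add: case_prod_beta')
    show "(\<lambda>(t, w, x). T t x - T t (y w) + y (\<theta> t w)) \<in> space N \<rightarrow> X"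
      by (auto simp: space_N intro!: subspace_add subspace_diff \<open>subspace X\<close> maps y_values \<theta>_space)
  qed
qed

section \<open>The semigroup generated by the part of \<open>A\<close> in \<open>closure D\<close>\<close>

lemma resolv_solves:
  assumes "in_real_resolvent X D A \<nu>" and "x \<in> X"
  shows "resolv D A \<nu> x \<in> D \<and> \<nu> *\<^sub>R resolv D A \<nu> x - A (resolv D A \<nu> x) = x"
proof -
  have "\<exists>!y. y \<in> D \<and> \<nu> *\<^sub>R y - A y = x"
    using assms by (simp add: in_real_resolvent_def)
  then show ?thesis
    unfolding resolv_def by (rule theI')
qed

locale generated_semigroup =
  fixes D :: "'h::{real_normed_vector, complete_space} set"
    and A :: "'h \<Rightarrow> 'h"
    and T :: "real \<Rightarrow> 'h \<Rightarrow> 'h"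
  assumes subspace_D: "subspace D"
    and generated: "C0_semigroup_generated (closure D) (part_dom D A) A T"
begin

lemma subspace_H0: "subspace (closure D)"
  by (rule subspace_closure[OF subspace_D])

lemma T_maps: "t \<ge> 0 \<Longrightarrow> x \<in> closure D \<Longrightarrow> T t x \<in> closure D"
  and T_add: "t \<ge> 0 \<Longrightarrow> x \<in> closure D \<Longrightarrow> y \<in> closure D \<Longrightarrow> T t (x + y) = T t x + T t y"
  and T_scaleR: "t \<ge> 0 \<Longrightarrow> x \<in> closure D \<Longrightarrow> T t (c *\<^sub>R x) = c *\<^sub>R T t x"
  and T_bounded: "t \<ge> 0 \<Longrightarrow> \<exists>C. \<forall>x\<in>closure D. norm (T t x) \<le> C * norm x"
  and T_0: "x \<in> closure D \<Longrightarrow> T 0 x = x"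
  and T_add_time: "t \<ge> 0 \<Longrightarrow> s \<ge> 0 \<Longrightarrow> x \<in> closure D \<Longrightarrow> T (t + s) x = T t (T s x)"
  and continuous_on_orbit: "x \<in> closure D \<Longrightarrow> continuous_on {0..} (\<lambda>t. T t x)"
  and part_dom_iff: "x \<in> part_dom D A \<longleftrightarrow>
    x \<in> closure D \<and> (\<exists>l. ((\<lambda>h. (1 / h) *\<^sub>R (T h x - x)) \<longlongrightarrow> l) (at_right 0))"
  and generator_limit: "x \<in> part_dom D A \<Longrightarrow> ((\<lambda>h. (1 / h) *\<^sub>R (T h x - x)) \<longlongrightarrow> A x) (at_right 0)"
  using generated unfolding C0_semigroup_generated_def by simp_all blast+

lemma part_dom_H0: "y \<in> part_dom D A \<Longrightarrow> y \<in> closure D \<and> A y \<in> closure D"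
  by (auto simp: part_dom_def intro: closure_subset[THEN subsetD])

lemma T_diff: "t \<ge> 0 \<Longrightarrow> x \<in> closure D \<Longrightarrow> y \<in> closure D \<Longrightarrow> T t (x - y) = T t x - T t y"
  using T_add[of t "x - y" y] subspace_diff[OF subspace_H0] by simp

lemma T_lipschitz:
  assumes "t \<ge> 0"
  obtains C where "C-lipschitz_on (closure D) (T t)"
proof -
  obtain C where C: "\<forall>x\<in>closure D. norm (T t x) \<le> C * norm x"
    using T_bounded[OF assms] by blast
  have "dist (T t x) (T t y) \<le> max C 0 * dist x y" if "x \<in> closure D" "y \<in> closure D" for x y
  proof -
    have "dist (T t x) (T t y) = norm (T t (x - y))"
      using T_diff[OF assms that] by (simp add: dist_norm)
    also have "\<dots> \<le> C * norm (x - y)"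
      using C subspace_diff[OF subspace_H0 that] by blast
    also have "\<dots> \<le> max C 0 * dist x y"
      by (simp add: dist_norm mult_right_mono)
    finally show ?thesis .
  qed
  then show ?thesis
    using that lipschitz_onI[of "closure D"] by fastforce
qed

lemma T_continuous_on: "t \<ge> 0 \<Longrightarrow> continuous_on (closure D) (T t)"
  by (metis T_lipschitz lipschitz_on_continuous_on)

lemma T_has_vector_derivative:
  assumes "t \<ge> 0" and g: "(g has_vector_derivative g') (at \<tau> within S)"
    and "\<And>x. x \<in> S \<Longrightarrow> g x \<in> closure D" "\<tau> \<in> S" "g' \<in> closure D"
  shows "((\<lambda>x. T t (g x)) has_vector_derivative T t g') (at \<tau> within S)"
proof -
  obtain C where C: "\<forall>x\<in>closure D. norm (T t x) \<le> C * norm x"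
    using T_bounded[OF assms(1)] by blast
  define r where "r y = (1 / norm (y - \<tau>)) *\<^sub>R (g y - (g \<tau> + (y - \<tau>) *\<^sub>R g'))" for y
  have r_H0: "r y \<in> closure D" if "y \<in> S" for y
    using assms(3-5) that unfolding r_def
    by (intro subspace_scale subspace_diff subspace_add subspace_H0) auto
  have bound: "norm ((1 / norm (y - \<tau>)) *\<^sub>R (T t (g y) - (T t (g \<tau>) + (y - \<tau>) *\<^sub>R T t g')))
      \<le> norm (r y) * C" if "y \<in> S" for y
  proof -
    have "(1 / norm (y - \<tau>)) *\<^sub>R (T t (g y) - (T t (g \<tau>) + (y - \<tau>) *\<^sub>R T t g')) = T t (r y)"
      using assms(3-5) that unfolding r_def
      by (simp add: T_scaleR T_diff T_add subspace_scale subspace_diff subspace_add subspace_H0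
          \<open>t \<ge> 0\<close>)
    then show ?thesis
      using C r_H0[OF that] by (simp add: mult.commute)
  qed
  then have "eventually (\<lambda>y. norm ((1 / norm (y - \<tau>)) *\<^sub>R
      (T t (g y) - (T t (g \<tau>) + (y - \<tau>) *\<^sub>R T t g'))) \<le> norm (r y) * C) (at \<tau> within S)"
    unfolding eventually_at_filter by (intro always_eventually allI impI bound)
  moreover have "(r \<longlongrightarrow> 0) (at \<tau> within S)"
    using g unfolding has_vector_derivative_def has_derivative_within r_def by simp
  ultimately show ?thesis
    unfolding has_vector_derivative_def has_derivative_within
    by (auto intro: tendsto_0_le bounded_linear_scaleR_left)
qed

definition orbit_integral :: "'h \<Rightarrow> real \<Rightarrow> 'h" where
  "orbit_integral u t = integral {0..t} (\<lambda>r. T r u)"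

lemma orbit_integral_0 [simp]: "orbit_integral u 0 = 0"
  by (simp add: orbit_integral_def)

lemma continuous_on_orbit_interval: "u \<in> closure D \<Longrightarrow> continuous_on {0..b} (\<lambda>r. T r u)"
  by (rule continuous_on_subset[OF continuous_on_orbit]) auto

lemma orbit_integral_has_vector_derivative:
  "u \<in> closure D \<Longrightarrow> \<tau> \<in> {0..b} \<Longrightarrow>
    (orbit_integral u has_vector_derivative T \<tau> u) (at \<tau> within {0..b})"
  unfolding orbit_integral_def
  by (rule integral_has_vector_derivative_complete[OF continuous_on_orbit_interval])

lemma orbit_integral_has_right_derivative:
  "u \<in> closure D \<Longrightarrow> \<tau> \<ge> 0 \<Longrightarrow> (orbit_integral u has_vector_derivative T \<tau> u) (at_right \<tau>)"
  by (rule has_vector_derivative_at_right_if_within[OF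
        orbit_integral_has_vector_derivative[of u \<tau> "\<tau> + 1"]]) auto

lemma continuous_on_orbit_integral: "u \<in> closure D \<Longrightarrow> continuous_on {0..b} (orbit_integral u)"
  unfolding continuous_on_eq_continuous_within
  using orbit_integral_has_vector_derivative has_vector_derivative_continuous by blast

lemma orbit_integral_diff_scaleR:
  assumes "u \<in> closure D" "v \<in> closure D"
  shows "orbit_integral (c *\<^sub>R u - v) \<tau> = c *\<^sub>R orbit_integral u \<tau> - orbit_integral v \<tau>"
proof -
  have "orbit_integral (c *\<^sub>R u - v) \<tau> = integral {0..\<tau>} (\<lambda>r. c *\<^sub>R T r u - T r v)"
    unfolding orbit_integral_def using assms
    by (intro integral_cong) (simp add: T_diff T_scaleR subspace_scale subspace_H0)
  also have "\<dots> = c *\<^sub>R orbit_integral u \<tau> - orbit_integral v \<tau>"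
    unfolding orbit_integral_def using assms
    by (simp add: integral_diff integrable_cmul integrable_continuous_interval_complete
        continuous_on_orbit_interval)
  finally show ?thesis .
qed

text \<open>The increment of the orbit integral over a short step is \<open>h T \<sigma> u \<in> closure D\<close> up to
  \<open>o(h)\<close>, so the distance to \<open>closure D\<close> has nonpositive right Dini derivative.\<close>

lemma orbit_integral_in_H0:
  assumes "u \<in> closure D" and "\<tau> \<ge> 0"
  shows "orbit_integral u \<tau> \<in> closure D"
proof -
  have "infdist (orbit_integral u \<tau>) (closure D) \<le> infdist (orbit_integral u 0) (closure D)"
  proof (rule le_if_right_Dini_nonpos[OF \<open>\<tau> \<ge> 0\<close>])
    show "continuous_on {0..\<tau>} (\<lambda>x. infdist (orbit_integral u x) (closure D))"
      by (intro continuous_on_infdist continuous_on_orbit_integral assms(1))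
    fix \<sigma> e :: real assume "\<sigma> \<in> {0..<\<tau>}" "e > 0"
    with assms(1) have "eventually (\<lambda>x. norm (orbit_integral u x - orbit_integral u \<sigma>
        - (x - \<sigma>) *\<^sub>R T \<sigma> u) \<le> e * (x - \<sigma>)) (at_right \<sigma>)"
      by (auto intro: has_vector_derivative_at_right_estimate orbit_integral_has_right_derivative)
    then show "eventually (\<lambda>x. infdist (orbit_integral u x) (closure D)
        - infdist (orbit_integral u \<sigma>) (closure D) \<le> e * (x - \<sigma>)) (at_right \<sigma>)"
    proof eventually_elim
      case (elim x)
      have "infdist (orbit_integral u x) (closure D)
          \<le> infdist (orbit_integral u \<sigma> + (x - \<sigma>) *\<^sub>R T \<sigma> u) (closure D)
            + dist (orbit_integral u x) (orbit_integral u \<sigma> + (x - \<sigma>) *\<^sub>R T \<sigma> u)"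
        by (rule infdist_triangle)
      also have "\<dots> \<le> infdist (orbit_integral u \<sigma>) (closure D) + e * (x - \<sigma>)"
        using elim \<open>\<sigma> \<in> {0..<\<tau>}\<close> assms(1)
        by (intro add_mono infdist_add_subspace_le subspace_H0 subspace_scale T_maps)
          (auto simp: dist_norm algebra_simps)
      finally show ?case by simp
    qed
  qed
  then have "infdist (orbit_integral u \<tau>) (closure D) = 0"
    using subspace_0[OF subspace_H0] infdist_nonneg[of _ "closure D"] by (simp add: antisym)
  then show ?thesis
    using in_closure_iff_infdist_zero[of "closure D"] subspace_0[OF subspace_D] by auto
qed

lemma T_orbit_integral:
  assumes "u \<in> closure D" "h \<ge> 0" "\<tau> \<ge> 0"
  shows "T h (orbit_integral u \<tau>) = orbit_integral u (\<tau> + h) - orbit_integral u h"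
proof -
  define g where
    "g = (\<lambda>\<sigma>. T h (orbit_integral u \<sigma>) - (orbit_integral u (\<sigma> + h) - orbit_integral u h))"
  have g_deriv: "(g has_vector_derivative 0) (at \<sigma> within {0..\<tau>})" if "\<sigma> \<in> {0..\<tau>}" for \<sigma>
  proof -
    have T_part: "((\<lambda>\<sigma>. T h (orbit_integral u \<sigma>)) has_vector_derivative T h (T \<sigma> u))
        (at \<sigma> within {0..\<tau>})"
      using that assms
      by (intro T_has_vector_derivative orbit_integral_has_vector_derivative
          orbit_integral_in_H0 T_maps) auto
    have "((orbit_integral u \<circ> (\<lambda>\<sigma>. \<sigma> + h)) has_vector_derivative 1 *\<^sub>R T (\<sigma> + h) u)
        (at \<sigma> within {0..\<tau>})"
    proof (rule vector_diff_chain_within)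
      show "((\<lambda>\<sigma>. \<sigma> + h) has_vector_derivative 1) (at \<sigma> within {0..\<tau>})"
        by (auto intro!: derivative_eq_intros)
      show "(orbit_integral u has_vector_derivative T (\<sigma> + h) u)
          (at (\<sigma> + h) within (\<lambda>\<sigma>. \<sigma> + h) ` {0..\<tau>})"
        using that assms
        by (intro has_vector_derivative_within_subset[OF
              orbit_integral_has_vector_derivative[of u _ "\<tau> + h"]]) auto
    qed
    from has_vector_derivative_diff[OF this has_vector_derivative_const]
    have shift_part: "((\<lambda>\<sigma>. orbit_integral u (\<sigma> + h) - orbit_integral u h) has_vector_derivative
        T (\<sigma> + h) u) (at \<sigma> within {0..\<tau>})"
      by (simp add: o_def)
    have "T h (T \<sigma> u) = T (\<sigma> + h) u"
      using that assms T_add_time[of h \<sigma> u] by (simp add: add.commute)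
    then show ?thesis
      using has_vector_derivative_diff[OF T_part shift_part] by (simp add: g_def)
  qed
  have "g \<tau> = g 0"
    using has_vector_derivative_zero_constant[OF convex_real_interval(5) g_deriv] assms
    by (metis atLeastAtMost_iff order_refl)
  also have "g 0 = 0"
    using T_scaleR[of h 0 0] subspace_0[OF subspace_H0] assms by (simp add: g_def)
  finally show ?thesis by (simp add: g_def)
qed

lemma orbit_integral_generator:
  assumes "u \<in> closure D" and "\<tau> \<ge> 0"
  shows "orbit_integral u \<tau> \<in> part_dom D A" and "A (orbit_integral u \<tau>) = T \<tau> u - u"
proof -
  have "((\<lambda>h. (1 / h) *\<^sub>R (orbit_integral u (\<tau> + h) - orbit_integral u \<tau>)
      - (1 / h) *\<^sub>R (orbit_integral u (0 + h) - orbit_integral u 0)) \<longlongrightarrow> T \<tau> u - T 0 u) (at_right 0)"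
    using assms orbit_integral_has_right_derivative[of u \<tau>]
      orbit_integral_has_right_derivative[of u 0]
    by (intro tendsto_diff) (simp_all add: has_vector_derivative_at_right_iff)
  moreover have "eventually (\<lambda>h. (1 / h) *\<^sub>R (orbit_integral u (\<tau> + h) - orbit_integral u \<tau>)
      - (1 / h) *\<^sub>R (orbit_integral u (0 + h) - orbit_integral u 0)
      = (1 / h) *\<^sub>R (T h (orbit_integral u \<tau>) - orbit_integral u \<tau>)) (at_right 0)"
    using assms by (intro eventually_at_rightI[of 0 1])
      (simp_all add: T_orbit_integral scaleR_diff_right)
  ultimately have lim: "((\<lambda>h. (1 / h) *\<^sub>R (T h (orbit_integral u \<tau>) - orbit_integral u \<tau>))
      \<longlongrightarrow> T \<tau> u - u) (at_right 0)"
    using T_0[OF assms(1)] by (auto intro: Lim_transform_eventually)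
  then show dom: "orbit_integral u \<tau> \<in> part_dom D A"
    using part_dom_iff orbit_integral_in_H0[OF assms] by blast
  show "A (orbit_integral u \<tau>) = T \<tau> u - u"
    using tendsto_unique[OF _ generator_limit[OF dom] lim] by simp
qed

lemma T_orbit_has_right_derivative:
  assumes "y \<in> part_dom D A" and "\<sigma> \<ge> 0"
  shows "((\<lambda>t. T t y) has_vector_derivative T \<sigma> (A y)) (at_right \<sigma>)"
  unfolding has_vector_derivative_at_right_iff
proof (rule Lim_transform_eventually)
  have y: "y \<in> closure D" "A y \<in> closure D" using part_dom_H0[OF assms(1)] by auto
  have "eventually (\<lambda>h. (1 / h) *\<^sub>R (T h y - y) \<in> closure D) (at_right 0)"
    using y by (intro eventually_at_rightI[of 0 1] subspace_scale subspace_diff subspace_H0 T_maps)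
      auto
  then show "((\<lambda>h. T \<sigma> ((1 / h) *\<^sub>R (T h y - y))) \<longlongrightarrow> T \<sigma> (A y)) (at_right 0)"
    by (rule continuous_on_tendsto_compose[OF T_continuous_on[OF assms(2)]
          generator_limit[OF assms(1)] y(2)])
  show "eventually (\<lambda>h. T \<sigma> ((1 / h) *\<^sub>R (T h y - y)) = (1 / h) *\<^sub>R (T (\<sigma> + h) y - T \<sigma> y))
      (at_right 0)"
    using y assms(2)
    by (intro eventually_at_rightI[of 0 1])
      (simp_all add: T_scaleR T_diff T_add_time T_maps subspace_diff subspace_H0)
qed

lemma T_minus_id_eq_orbit_integral:
  assumes "y \<in> part_dom D A" and "\<tau> \<ge> 0"
  shows "T \<tau> y - y = orbit_integral (A y) \<tau>"
proof -
  have y: "y \<in> closure D" "A y \<in> closure D" using part_dom_H0[OF assms(1)] by auto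
  define g where "g = (\<lambda>\<sigma>. T \<sigma> y - y - orbit_integral (A y) \<sigma>)"
  have "g \<tau> = g 0"
  proof (rule eq_if_right_derivative_zero[OF assms(2)])
    show "continuous_on {0..\<tau>} g"
      unfolding g_def
      by (intro continuous_intros continuous_on_orbit_interval continuous_on_orbit_integral y)
    fix \<sigma> assume "\<sigma> \<in> {0..<\<tau>}"
    then show "(g has_vector_derivative 0) (at_right \<sigma>)"
      using has_vector_derivative_diff[OF has_vector_derivative_diff[OF
            T_orbit_has_right_derivative[OF assms(1)] has_vector_derivative_const]
            orbit_integral_has_right_derivative[OF y(2)]]
      by (simp add: g_def)
  qed
  then show ?thesis by (simp add: g_def T_0 y)
qed

lemma integrated_sg_deriv_eq:
  assumes "in_real_resolvent UNIV D A \<nu>" and "x \<in> closure D" and "t \<ge> 0"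
  shows "integrated_sg_deriv D A T \<nu> t x = T t x"
proof -
  define y where "y = resolv D A \<nu> x"
  have y: "y \<in> D" "\<nu> *\<^sub>R y - A y = x"
    using resolv_solves[OF assms(1)] by (simp_all add: y_def)
  then have "A y = \<nu> *\<^sub>R y - x" by (simp add: algebra_simps)
  then have y_H0: "y \<in> closure D" "A y \<in> closure D"
    using y(1) assms(2) closure_subset
    by (auto intro: subspace_diff subspace_scale subspace_H0)
  then have "y \<in> part_dom D A" using y(1) by (simp add: part_dom_def)
  have integrated_sg_eq: "integrated_sg D A T \<nu> \<tau> x = orbit_integral x \<tau>" if "\<tau> \<ge> 0" for \<tau>
  proof -
    have "integrated_sg D A T \<nu> \<tau> x = \<nu> *\<^sub>R orbit_integral y \<tau> - A (orbit_integral y \<tau>)"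
      by (simp add: integrated_sg_def orbit_integral_def y_def Let_def)
    also have "A (orbit_integral y \<tau>) = orbit_integral (A y) \<tau>"
      using orbit_integral_generator(2)[OF y_H0(1) that]
        T_minus_id_eq_orbit_integral[OF \<open>y \<in> part_dom D A\<close> that] by simp
    also have "\<nu> *\<^sub>R orbit_integral y \<tau> - orbit_integral (A y) \<tau> = orbit_integral x \<tau>"
      using orbit_integral_diff_scaleR[OF y_H0, of \<nu> \<tau>] unfolding y(2) by simp
    finally show ?thesis .
  qed
  have "at t within {0..} = at t within {0..t + 1}"
    by (rule at_within_nhd[of _ "{..<t + 1}"]) (use assms(3) in auto)
  moreover have "((\<lambda>\<tau>. integrated_sg D A T \<nu> \<tau> x) has_vector_derivative T t x)
      (at t within {0..t + 1})"
    using assms(3) integrated_sg_eq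
    by (intro has_vector_derivative_transform[OF _ _
          orbit_integral_has_vector_derivative[OF assms(2)]]) auto
  moreover have "at t within {0..t + 1} \<noteq> bot"
    using assms(3) by (simp add: trivial_limit_within)
  ultimately show ?thesis
    unfolding integrated_sg_deriv_def by (simp add: vector_derivative_within)
qed

lemma T_affine_cocycle:
  assumes "t \<ge> 0" "s \<ge> 0" "\<xi> \<in> closure D" "a \<in> closure D" "b \<in> closure D"
  shows "T s (T t \<xi> - T t a + b) - T s b = T (t + s) \<xi> - T (t + s) a"
  using assms
  by (simp add: T_add T_diff T_maps subspace_diff subspace_H0 T_add_time[of s t] add.commute)

end

section \<open>The random dynamical system\<close>

lemma ergodic_mds_flow:
  assumes "ergodic_mds M \<theta>"
  shows ergodic_mds_measurable: "(\<lambda>(t, w). \<theta> t w) \<in> borel \<Otimes>\<^sub>M M \<rightarrow>\<^sub>M M"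
    and ergodic_mds_0: "\<And>w. w \<in> space M \<Longrightarrow> \<theta> 0 w = w"
    and ergodic_mds_add: "\<And>t s w. w \<in> space M \<Longrightarrow> \<theta> (t + s) w = \<theta> s (\<theta> t w)"
    and ergodic_mds_space: "\<And>t w. w \<in> space M \<Longrightarrow> \<theta> t w \<in> space M"
proof -
  show meas: "(\<lambda>(t, w). \<theta> t w) \<in> borel \<Otimes>\<^sub>M M \<rightarrow>\<^sub>M M"
    and "\<And>w. w \<in> space M \<Longrightarrow> \<theta> 0 w = w"
    using assms by (simp_all add: ergodic_mds_def)
  show "\<And>t s w. w \<in> space M \<Longrightarrow> \<theta> (t + s) w = \<theta> s (\<theta> t w)"
    using assms unfolding ergodic_mds_def by (metis add.commute)
  show "\<theta> t w \<in> space M" if "w \<in> space M" for t w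
    using measurable_space[OF meas, of "(t, w)"] that by (simp add: space_pair_measure)
qed

lemma rds_if_perfect_cocycle:
  assumes "(\<lambda>(t, w, x). \<phi> t w x)
      \<in> restrict_space borel {0..} \<Otimes>\<^sub>M (M \<Otimes>\<^sub>M restrict_space borel X) \<rightarrow>\<^sub>M restrict_space borel X"
    and "\<And>w x. w \<in> space M \<Longrightarrow> x \<in> X \<Longrightarrow> \<phi> 0 w x = x"
    and "\<And>w t s x. w \<in> space M \<Longrightarrow> t \<ge> 0 \<Longrightarrow> s \<ge> 0 \<Longrightarrow> x \<in> X \<Longrightarrow>
      \<phi> (t + s) w x = \<phi> s (\<theta> t w) (\<phi> t w x)"
  shows "rds M \<theta> X \<phi>"
  unfolding rds_def using assms by (intro conjI bexI[of _ "space M"]) auto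

theorem proposition3p4:
  fixes D :: "'h::{real_inner, polish_space} set"
    and A :: "'h \<Rightarrow> 'h"
    and omegaA nu :: real
    and T0 :: "real \<Rightarrow> 'h \<Rightarrow> 'h"
    and M :: "'w measure"
    and \<theta> :: "real \<Rightarrow> 'w \<Rightarrow> 'w"
    and Y :: "'w \<Rightarrow> real \<Rightarrow> 'h"
  assumes lin: "lin_op D A"
    and H0_proper: "closure D \<noteq> UNIV"
    and A: "assumption_A D A omegaA"
    and T0: "C0_semigroup_generated (closure D) (part_dom D A) A T0"
    and nu: "nu > omegaA"
    and neg: "omegaA < 0"
    and mds: "ergodic_mds M \<theta>"
    and Y_H0: "\<forall>w\<in>space M. \<forall>t. Y w t \<in> closure D"
    and Y_meas: "\<forall>t. (\<lambda>w. Y w t) \<in> borel_measurable M"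
    and Y_stat: "\<forall>t s. AE w in M. Y (\<theta> t w) s = Y w (t + s)"
  shows "rds M \<theta> (closure D)
           (\<lambda>t w \<xi>. T0 t \<xi> - integrated_sg_deriv D A T0 nu t (Y w 0) + Y (\<theta> t w) 0) \<and>
         (\<forall>w\<in>space M. \<forall>t\<ge>0. \<forall>s\<ge>0. \<forall>\<xi>\<in>closure D.
            (\<lambda>t w \<xi>. T0 t \<xi> - integrated_sg_deriv D A T0 nu t (Y w 0) + Y (\<theta> t w) 0) (t + s) w \<xi> =
            (\<lambda>t w \<xi>. T0 t \<xi> - integrated_sg_deriv D A T0 nu t (Y w 0) + Y (\<theta> t w) 0) s (\<theta> t w)
              ((\<lambda>t w \<xi>. T0 t \<xi> - integrated_sg_deriv D A T0 nu t (Y w 0) + Y (\<theta> t w) 0) t w \<xi>))"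
proof -
  interpret generated_semigroup D A T0
    using lin T0 by unfold_locales (simp add: lin_op_def)
  define \<phi> where "\<phi> = (\<lambda>t w \<xi>. T0 t \<xi> - integrated_sg_deriv D A T0 nu t (Y w 0) + Y (\<theta> t w) 0)"
  have "in_real_resolvent UNIV D A nu"
    using A nu by (simp add: assumption_A_def)
  then have \<phi>_eq: "\<phi> t w \<xi> = T0 t \<xi> - T0 t (Y w 0) + Y (\<theta> t w) 0"
    if "t \<ge> 0" "w \<in> space M" for t w \<xi>
    using integrated_sg_deriv_eq Y_H0 that by (simp add: \<phi>_def)
  have cocycle: "\<phi> (t + s) w \<xi> = \<phi> s (\<theta> t w) (\<phi> t w \<xi>)"
    if "w \<in> space M" "t \<ge> 0" "s \<ge> 0" "\<xi> \<in> closure D" for w t s \<xi>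
    using that T_affine_cocycle[OF that(2-4)] Y_H0
    by (simp add: \<phi>_eq ergodic_mds_space[OF mds] ergodic_mds_add[OF mds])
  have "(\<lambda>w. Y w 0) \<in> M \<rightarrow>\<^sub>M restrict_space borel (closure D)"
    using Y_H0 Y_meas by (intro measurable_restrict_space2) auto
  from measurable_flow_perturbation[OF subspace_H0 continuous_on_orbit T_continuous_on T_maps
      ergodic_mds_measurable[OF mds] this]
  have "(\<lambda>(t, w, \<xi>). \<phi> t w \<xi>)
      \<in> restrict_space borel {0..} \<Otimes>\<^sub>M (M \<Otimes>\<^sub>M restrict_space borel (closure D))
        \<rightarrow>\<^sub>M restrict_space borel (closure D)"
    by (rule measurable_cong[THEN iffD1, rotated])
      (auto simp: space_pair_measure space_restrict_space \<phi>_eq)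
  then have "rds M \<theta> (closure D) \<phi>"
    by (rule rds_if_perfect_cocycle[OF _ _ cocycle])
      (simp_all add: \<phi>_eq T_0 Y_H0 ergodic_mds_0[OF mds])
  with cocycle show ?thesis
    unfolding \<phi>_def by simp
qed

end
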